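(* Let $G$ be a finite group and let $\vec{\mathcal{C}}$ be a directed cycle of $\vec{\mathcal{P}}(G)$. Then $\vec{\mathcal{C}}$ is a maximal directed cycle if and only if its vertex set equals $[x]_{\diamond}$ for some $x\in G$ with $|[x]_{\diamond}|\geq3$.
   Context: The directed power graph $\vec{\mathcal{P}}(G)$ has vertex set $G$ and an arc $(x,y)$ iff $x\neq y$ and $y=x^m$ for some positive integer $m$. $x\diamond y$ iff $\langle x\rangle=\langle y\rangle$; $[x]_\diamond$ is the class of $x$. A directed cycle is a sequence $x_1,\dots,x_k,x_1$ of $k\ge3$ distinct vertices with arcs $(x_i,x_{i+1})$ for $i<k$ and $(x_k,x_1)$ (a subdigraph). A directed cycle is maximal if there is no directed cycle of the digraph whose vertex set properly contains its vertex set. *)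

theory Defs
  imports "HOL-Algebra.Algebra"
begin

definition ppg_arc :: "('a, 'b) monoid_scheme \<Rightarrow> 'a \<Rightarrow> 'a \<Rightarrow> bool" where
  "ppg_arc G x y \<longleftrightarrow> x \<in> carrier G \<and> y \<in> carrier G \<and> x \<noteq> y \<and>
     (\<exists>m::nat. m > 0 \<and> y = x [^]\<^bsub>G\<^esub> m)"

(* a directed cycle x_1,...,x_k,x_1 given as the list [x_1,...,x_k] *)
definition ppg_dcycle :: "('a, 'b) monoid_scheme \<Rightarrow> 'a list \<Rightarrow> bool" where
  "ppg_dcycle G xs \<longleftrightarrow> length xs \<ge> 3 \<and> distinct xs \<and> set xs \<subseteq> carrier G \<and>
     (\<forall>i. Suc i < length xs \<longrightarrow> ppg_arc G (xs ! i) (xs ! Suc i)) \<and>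
     ppg_arc G (last xs) (hd xs)"

definition ppg_max_dcycle :: "('a, 'b) monoid_scheme \<Rightarrow> 'a list \<Rightarrow> bool" where
  "ppg_max_dcycle G xs \<longleftrightarrow> ppg_dcycle G xs \<and>
     \<not> (\<exists>ys. ppg_dcycle G ys \<and> set xs \<subset> set ys)"

definition diamond_class :: "('a, 'b) monoid_scheme \<Rightarrow> 'a \<Rightarrow> 'a set" where
  "diamond_class G x = {y \<in> carrier G. generate G {y} = generate G {x}}"

end

theory Submission
  imports Defs
begin

(* Along an arc y = x^m the cyclic subgroup can only shrink, so going once around a directed
   cycle shows that all its vertices generate the same cyclic subgroup, i.e. the vertex set lies
   in a single class [x]. Conversely, in a finite group two distinct elements generating the same
   cyclic subgroup are positive powers of each other, so any enumeration of a class with at least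
   three elements is a directed cycle. *)

context group
begin

lemma ppg_arc_generate_subset:
  assumes "ppg_arc G x y"
  shows "generate G {y} \<subseteq> generate G {x}"
proof -
  from assms obtain m :: nat where x: "x \<in> carrier G" and y: "y = x [^] m"
    unfolding ppg_arc_def by blast
  have "y = x [^] (int m)" using y by (simp add: int_pow_int)
  then have "y \<in> generate G {x}" using generate_pow[OF x] by blast
  then show ?thesis
    using generate_subgroup_incl generate_is_subgroup x by blast
qed

lemma generate_singleton_eq_pos_pow:
  assumes fin: "finite (carrier G)" and y: "y \<in> carrier G" and z: "z \<in> generate G {y}"
  obtains m :: nat where "m > 0" and "z = y [^] m"
proof -
  obtain k :: nat where k: "z = y [^] k"
    using generate_pow_on_finite_carrier[OF fin y] z by blast
  have "y [^] (k + order G) = y [^] k"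
    using pow_order_eq_1[OF y] y by (simp add: nat_pow_mult[symmetric])
  moreover have "order G > 0" using fin by (simp add: order_gt_0_iff_finite)
  ultimately show ?thesis using k that[of "k + order G"] by simp
qed

lemma ppg_arc_if_generate_eq:
  assumes "finite (carrier G)" and "y \<in> carrier G" and "z \<in> carrier G" and "y \<noteq> z"
    and "generate G {y} = generate G {z}"
  shows "ppg_arc G y z"
proof -
  have "z \<in> generate G {y}" using assms by (simp add: generate.incl)
  then show ?thesis
    using generate_singleton_eq_pos_pow assms unfolding ppg_arc_def by metis
qed

lemma ppg_dcycle_generate_antimono:
  assumes c: "ppg_dcycle G xs" and "i \<le> j" and "j < length xs"
  shows "generate G {xs ! j} \<subseteq> generate G {xs ! i}"
  using assms(2,3)
proof (induction j)
  case 0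
  then show ?case by simp
next
  case (Suc j)
  show ?case
  proof (cases "i = Suc j")
    case False
    then have "generate G {xs ! j} \<subseteq> generate G {xs ! i}" using Suc by simp
    moreover have "ppg_arc G (xs ! j) (xs ! Suc j)"
      using c Suc.prems unfolding ppg_dcycle_def by blast
    ultimately show ?thesis using ppg_arc_generate_subset by blast
  qed simp
qed

lemma ppg_dcycle_generate_eq_hd:
  assumes c: "ppg_dcycle G xs" and z: "z \<in> set xs"
  shows "generate G {z} = generate G {hd xs}"
proof -
  have len: "length xs \<ge> 3" using c unfolding ppg_dcycle_def by blast
  obtain i where i: "i < length xs" "z = xs ! i" using z by (metis in_set_conv_nth)
  have hd: "hd xs = xs ! 0" using len by (intro hd_conv_nth) auto
  have last: "last xs = xs ! (length xs - 1)" using len by (intro last_conv_nth) auto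
  have "generate G {z} \<subseteq> generate G {hd xs}"
    using ppg_dcycle_generate_antimono[OF c, of 0 i] i hd by simp
  moreover have "generate G {last xs} \<subseteq> generate G {z}"
    using ppg_dcycle_generate_antimono[OF c, of i "length xs - 1"] i last by simp
  moreover have "generate G {hd xs} \<subseteq> generate G {last xs}"
    using c ppg_arc_generate_subset unfolding ppg_dcycle_def by blast
  ultimately show ?thesis by blast
qed

lemma ppg_dcycle_subset_diamond_class:
  assumes c: "ppg_dcycle G xs" and z: "z \<in> set xs"
  shows "set xs \<subseteq> diamond_class G z"
  using ppg_dcycle_generate_eq_hd[OF c] z c unfolding diamond_class_def ppg_dcycle_def by auto

lemma ppg_dcycle_if_subset_diamond_class:
  assumes fin: "finite (carrier G)" and d: "distinct ys" and len: "length ys \<ge> 3"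
    and s: "set ys \<subseteq> diamond_class G x"
  shows "ppg_dcycle G ys"
proof -
  have sub: "set ys \<subseteq> carrier G" using s unfolding diamond_class_def by blast
  have arc: "ppg_arc G y z" if "y \<in> set ys" "z \<in> set ys" "y \<noteq> z" for y z
  proof (rule ppg_arc_if_generate_eq[OF fin])
    show "generate G {y} = generate G {z}" using that s unfolding diamond_class_def by auto
  qed (use that sub in auto)
  have "ppg_arc G (ys ! i) (ys ! Suc i)" if "Suc i < length ys" for i
    using arc d that by (simp add: nth_eq_iff_index_eq)
  moreover have "ppg_arc G (last ys) (hd ys)"
  proof (rule arc)
    show "last ys \<noteq> hd ys" using d len by (cases ys) auto
  qed (use len in \<open>auto intro: hd_in_set last_in_set\<close>)
  ultimately show ?thesis using len d sub unfolding ppg_dcycle_def by blast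
qed

end

theorem mainTheorem3:
  fixes G (structure) and xs :: "'a list"
  assumes "group G" and "finite (carrier G)" and "ppg_dcycle G xs"
  shows "ppg_max_dcycle G xs \<longleftrightarrow>
    (\<exists>x \<in> carrier G. set xs = diamond_class G x \<and> card (diamond_class G x) \<ge> 3)"
proof
  interpret group G by fact
  assume max: "ppg_max_dcycle G xs"
  have len: "length xs \<ge> 3" and dist: "distinct xs" and "set xs \<subseteq> carrier G"
    using assms(3) unfolding ppg_dcycle_def by auto
  then obtain z where z: "z \<in> set xs" "z \<in> carrier G" by (cases xs) auto
  let ?D = "diamond_class G z"
  have sub: "set xs \<subseteq> ?D" using ppg_dcycle_subset_diamond_class[OF assms(3) z(1)] .
  have finD: "finite ?D" using assms(2) unfolding diamond_class_def by simp
  have cardD: "card ?D \<ge> 3" using card_mono[OF finD sub] len distinct_card[OF dist] by simp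
  obtain ys where ys: "set ys = ?D" "distinct ys" using finite_distinct_list[OF finD] by blast
  have "ppg_dcycle G ys"
    using ppg_dcycle_if_subset_diamond_class[OF assms(2) ys(2)] ys cardD distinct_card by fastforce
  then have "set xs = ?D" using max sub ys(1) unfolding ppg_max_dcycle_def by blast
  then show "\<exists>x \<in> carrier G. set xs = diamond_class G x \<and> card (diamond_class G x) \<ge> 3"
    using z(2) cardD by blast
next
  interpret group G by fact
  assume "\<exists>x \<in> carrier G. set xs = diamond_class G x \<and> card (diamond_class G x) \<ge> 3"
  then obtain x where x: "x \<in> carrier G" "set xs = diamond_class G x" by blast
  have "set ys \<subseteq> set xs" if "ppg_dcycle G ys" "set xs \<subseteq> set ys" for ys
  proof -
    have "x \<in> set ys" using x that(2) unfolding diamond_class_def by auto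
    then show ?thesis using ppg_dcycle_subset_diamond_class[OF that(1)] x(2) by blast
  qed
  then show "ppg_max_dcycle G xs" using assms(3) unfolding ppg_max_dcycle_def by blast
qed

end
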